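(* Let $V = V_1 \oplus \cdots \oplus V_m$ be a finite-dimensional complex vector space decomposed as a direct sum, with dual decomposition $V^* = V_1^* \oplus \cdots \oplus V_m^*$, and let $T = \mathrm{Sym}(V^* )$, $T_i = \mathrm{Sym}(V_i^* ) \subset T$. Let $d \ge 2$, let $F_i \in S^d V_i$ and $t_i \in V_i^*$ for $i=1,\dots,m$, and let $F = F_1 + \cdots + F_m \in S^d V$. For each $i$, let $J_i \subset T$ be the ideal $$J_i = (F_i^{\perp} : t_i) + (t_i) + (V_1^*, \dots, V_{i-1}^*, V_{i+1}^*, \dots, V_m^* ),$$ where $F_i^\perp$ is the perp ideal of $F_i$ in $T_i$ and $(F_i^\perp : t_i) = \{g \in T_i : t_i g \in F_i^\perp\}$ (all regarded inside $T$ via $T_i \subset T$). Then $$(F^\perp : (t_1, \dots, t_m)) \subset J_1 \cap \cdots \cap J_m .$$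
   Context: For a complex vector space $W$, $S = \mathrm{Sym}(W) = \bigoplus_d S^d W$ and $\mathrm{Sym}(W^* )$ acts on $S$ by differentiation (apolarity action: linear forms in $W^*$ act as derivations). For $F \in S^d W$, the perp ideal is $F^\perp = \{ g \in \mathrm{Sym}(W^* ) : g\cdot F = 0\}$, a homogeneous ideal. For ideals $I, J$, the ideal quotient is $(I : J) = \{g : gJ \subset I\}$; $(F^\perp : (t_1,\dots,t_m))$ is the ideal quotient of $F^\perp$ (the perp ideal of $F$ in $T$) by the ideal generated by $t_1,\dots,t_m$. *)

theory Defs
  imports Complex_Main "HOL-Library.Poly_Mapping"
begin

text \<open>The same type models both S = Sym(V) (variables x_v,
  v a basis of V) and T = Sym(V^*) (dual variables y_v, dual basis).\<close>

type_synonym 'v cpoly = "('v \<Rightarrow>\<^sub>0 nat) \<Rightarrow>\<^sub>0 complex"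

definition var :: "'v \<Rightarrow> 'v cpoly" where
  "var v = Poly_Mapping.single (Poly_Mapping.single v 1) 1"

text \<open>Apolarity: y^alpha acting on c x^beta by differentiation.\<close>
definition diff_mono :: "('v \<Rightarrow>\<^sub>0 nat) \<Rightarrow> ('v \<Rightarrow>\<^sub>0 nat) \<Rightarrow> complex \<Rightarrow> 'v cpoly" where
  "diff_mono \<alpha> \<beta> c =
     (if \<forall>v. Poly_Mapping.lookup \<alpha> v \<le> Poly_Mapping.lookup \<beta> v
      then Poly_Mapping.single (\<beta> - \<alpha>)
             (c * (\<Prod>v\<in>Poly_Mapping.keys \<alpha>. fact (Poly_Mapping.lookup \<beta> v) / fact (Poly_Mapping.lookup \<beta> v - Poly_Mapping.lookup \<alpha> v)))
      else 0)"

definition apolar :: "'v cpoly \<Rightarrow> 'v cpoly \<Rightarrow> 'v cpoly" where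
  "apolar g F = (\<Sum>\<alpha>\<in>Poly_Mapping.keys g. \<Sum>\<beta>\<in>Poly_Mapping.keys F. diff_mono \<alpha> \<beta> (Poly_Mapping.lookup g \<alpha> * Poly_Mapping.lookup F \<beta>))"

definition homogeneous :: "nat \<Rightarrow> 'v cpoly \<Rightarrow> bool" where
  "homogeneous d p \<longleftrightarrow> (\<forall>\<alpha>\<in>Poly_Mapping.keys p. (\<Sum>v\<in>Poly_Mapping.keys \<alpha>. Poly_Mapping.lookup \<alpha> v) = d)"

text \<open>p involves only variables of block i (i.e. p lies in Sym(V_i) resp. Sym(V_i^*)).\<close>
definition in_block :: "('v \<Rightarrow> nat) \<Rightarrow> nat \<Rightarrow> 'v cpoly \<Rightarrow> bool" where
  "in_block blk i p \<longleftrightarrow> (\<forall>\<alpha>\<in>Poly_Mapping.keys p. \<forall>v\<in>Poly_Mapping.keys \<alpha>. blk v = i)"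

definition ideal_gen :: "'a::comm_ring_1 set \<Rightarrow> 'a set" where
  "ideal_gen S = {(\<Sum>a\<in>t. r a * a) | t r. finite t \<and> t \<subseteq> S}"

definition perp :: "'v cpoly \<Rightarrow> 'v cpoly set" where
  "perp F = {g. apolar g F = 0}"

definition perp_block :: "('v \<Rightarrow> nat) \<Rightarrow> nat \<Rightarrow> 'v cpoly \<Rightarrow> 'v cpoly set" where
  "perp_block blk i F = {g. in_block blk i g \<and> apolar g F = 0}"

definition ideal_quot :: "'a::comm_ring_1 set \<Rightarrow> 'a set \<Rightarrow> 'a set" where
  "ideal_quot I J = {g. \<forall>h\<in>J. g * h \<in> I}"

end

theory Submission
  imports Defs
begin

text \<open>Write g = g_i + h, where g_i collects the monomials of g involving only block-i
  variables; h lies in the ideal of the other blocks' variables.  A monomial containing a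
  variable outside block j annihilates every form in block j.  Hence for g in
  (F^perp : (t_1, ..., t_m)) the condition g t_i F = 0 reduces to g_i t_i F_i = 0,
  i.e. g_i lies in (F_i^perp : t_i), and so g lies in J_i.\<close>

lemma diff_mono_zero [simp]: "diff_mono \<alpha> \<beta> 0 = 0"
  by (simp add: diff_mono_def)

lemma diff_mono_add: "diff_mono \<alpha> \<beta> (x + y) = diff_mono \<alpha> \<beta> x + diff_mono \<alpha> \<beta> y"
  by (simp add: diff_mono_def distrib_right single_add)

lemma apolar_add_left: "apolar (p + q) F = apolar p F + apolar q F"
  unfolding apolar_def
  by (rule setsum_keys_plus_distrib) (simp_all add: distrib_right diff_mono_add sum.distrib)

lemma apolar_add_right: "apolar g (F + G) = apolar g F + apolar g G"
proof -
  have swap: "apolar g H = (\<Sum>\<beta>\<in>Poly_Mapping.keys H. \<Sum>\<alpha>\<in>Poly_Mapping.keys g.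
      diff_mono \<alpha> \<beta> (Poly_Mapping.lookup g \<alpha> * Poly_Mapping.lookup H \<beta>))" for H
    unfolding apolar_def by (rule sum.swap)
  show ?thesis
    unfolding swap
    by (rule setsum_keys_plus_distrib) (simp_all add: distrib_left diff_mono_add sum.distrib)
qed

lemma apolar_zero_right [simp]: "apolar g 0 = 0"
  by (simp add: apolar_def)

lemma apolar_sum_right: "apolar g (\<Sum>j\<in>J. F j) = (\<Sum>j\<in>J. apolar g (F j))"
  by (induction J rule: infinite_finite_induct) (auto simp: apolar_add_right)

lemma apolar_eq_0I:
  assumes "\<And>\<alpha> \<beta>. \<alpha> \<in> Poly_Mapping.keys g \<Longrightarrow> \<beta> \<in> Poly_Mapping.keys F \<Longrightarrow>
      \<exists>v. Poly_Mapping.lookup \<beta> v < Poly_Mapping.lookup \<alpha> v"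
  shows "apolar g F = 0"
  unfolding apolar_def
  by (intro sum.neutral ballI) (auto simp: diff_mono_def dest!: assms leD)

lemma zero_in_ideal_gen: "0 \<in> ideal_gen S"
  unfolding ideal_gen_def by (rule CollectI, rule exI[of _ "{}"]) auto

lemma mult_in_ideal_gen: "a \<in> S \<Longrightarrow> r * a \<in> ideal_gen S"
  unfolding ideal_gen_def by (rule CollectI, rule exI[of _ "{a}"], rule exI[of _ "\<lambda>_. r"]) auto

lemma gen_in_ideal_gen: "a \<in> S \<Longrightarrow> a \<in> ideal_gen S"
  using mult_in_ideal_gen[of a S 1] by simp

lemma ideal_gen_mono: "S \<subseteq> T \<Longrightarrow> ideal_gen S \<subseteq> ideal_gen T"
  unfolding ideal_gen_def by blast

lemma add_in_ideal_gen:
  assumes "x \<in> ideal_gen S" "y \<in> ideal_gen S"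
  shows "x + y \<in> ideal_gen S"
proof -
  obtain t1 r1 where x: "x = (\<Sum>a\<in>t1. r1 a * a)" "finite t1" "t1 \<subseteq> S"
    using assms(1) unfolding ideal_gen_def by blast
  obtain t2 r2 where y: "y = (\<Sum>a\<in>t2. r2 a * a)" "finite t2" "t2 \<subseteq> S"
    using assms(2) unfolding ideal_gen_def by blast
  define r where "r a = (if a \<in> t1 then r1 a else 0) + (if a \<in> t2 then r2 a else 0)" for a
  have "x = (\<Sum>a\<in>t1 \<union> t2. (if a \<in> t1 then r1 a else 0) * a)"
    unfolding x(1) by (rule sum.mono_neutral_cong_left) (use x y in auto)
  moreover have "y = (\<Sum>a\<in>t1 \<union> t2. (if a \<in> t2 then r2 a else 0) * a)"
    unfolding y(1) by (rule sum.mono_neutral_cong_left) (use x y in auto)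
  ultimately have "x + y = (\<Sum>a\<in>t1 \<union> t2. r a * a)"
    by (simp add: r_def distrib_right sum.distrib)
  with x y show ?thesis unfolding ideal_gen_def by blast
qed

lemma sum_in_ideal_gen:
  "finite I \<Longrightarrow> (\<And>i. i \<in> I \<Longrightarrow> f i \<in> ideal_gen S) \<Longrightarrow> sum f I \<in> ideal_gen S"
  by (induction I rule: finite_induct) (auto intro: zero_in_ideal_gen add_in_ideal_gen)

lemma keys_mult_obtain:
  assumes "\<alpha> \<in> Poly_Mapping.keys (p * q)"
  obtains a b where "\<alpha> = a + b" "a \<in> Poly_Mapping.keys p" "b \<in> Poly_Mapping.keys q"
  using subsetD[OF keys_mult assms] by blast

lemma keys_add_nat:
  "Poly_Mapping.keys ((a :: 'v \<Rightarrow>\<^sub>0 nat) + b) = Poly_Mapping.keys a \<union> Poly_Mapping.keys b"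
  by (auto simp: in_keys_iff lookup_add)

lemma in_block_mult: "in_block blk i p \<Longrightarrow> in_block blk i q \<Longrightarrow> in_block blk i (p * q)"
  unfolding in_block_def by (auto elim!: keys_mult_obtain simp: keys_add_nat)

definition off_block :: "('v \<Rightarrow> nat) \<Rightarrow> nat \<Rightarrow> 'v cpoly \<Rightarrow> bool" where
  "off_block blk i p \<longleftrightarrow> (\<forall>\<alpha>\<in>Poly_Mapping.keys p. \<exists>v\<in>Poly_Mapping.keys \<alpha>. blk v \<noteq> i)"

lemma off_block_mult_left: "off_block blk i p \<Longrightarrow> off_block blk i (p * q)"
  unfolding off_block_def by (fastforce elim!: keys_mult_obtain simp: keys_add_nat)

lemma off_block_mult_right: "off_block blk i q \<Longrightarrow> off_block blk i (p * q)"
  using off_block_mult_left[of blk i q p] by (simp add: mult.commute)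

lemma off_block_if_in_block:
  assumes "homogeneous d p" "d > 0" "in_block blk j p" "j \<noteq> i"
  shows "off_block blk i p"
  unfolding off_block_def
proof
  fix \<alpha> assume \<alpha>: "\<alpha> \<in> Poly_Mapping.keys p"
  then have "Poly_Mapping.keys \<alpha> \<noteq> {}"
    using assms(1,2) unfolding homogeneous_def by fastforce
  then obtain v where "v \<in> Poly_Mapping.keys \<alpha>" by blast
  with \<alpha> assms(3,4) show "\<exists>v\<in>Poly_Mapping.keys \<alpha>. blk v \<noteq> i"
    unfolding in_block_def by force
qed

lemma apolar_off_block:
  assumes "off_block blk i g" "in_block blk i F"
  shows "apolar g F = 0"
proof (rule apolar_eq_0I)
  fix \<alpha> \<beta> assume "\<alpha> \<in> Poly_Mapping.keys g" "\<beta> \<in> Poly_Mapping.keys F"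
  with assms obtain v where "v \<in> Poly_Mapping.keys \<alpha>" "v \<notin> Poly_Mapping.keys \<beta>"
    unfolding off_block_def in_block_def by blast
  then have "Poly_Mapping.lookup \<beta> v < Poly_Mapping.lookup \<alpha> v"
    by (simp add: in_keys_iff)
  then show "\<exists>v. Poly_Mapping.lookup \<beta> v < Poly_Mapping.lookup \<alpha> v" ..
qed

lemma sum_monomials: "p = (\<Sum>\<alpha>\<in>Poly_Mapping.keys p. Poly_Mapping.single \<alpha> (Poly_Mapping.lookup p \<alpha>))"
  by (rule poly_mapping_eqI) (auto simp: lookup_sum lookup_single when_def in_keys_iff)

lemma keys_sum_single: "Poly_Mapping.keys (\<Sum>\<alpha>\<in>S. Poly_Mapping.single \<alpha> (c \<alpha>)) \<subseteq> S"
  using keys_sum[of "\<lambda>\<alpha>. Poly_Mapping.single \<alpha> (c \<alpha>)" S] by (auto split: if_splits)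

lemma single_eq_mult_var:
  assumes "v \<in> Poly_Mapping.keys \<alpha>"
  shows "Poly_Mapping.single \<alpha> c = (Poly_Mapping.single (\<alpha> - Poly_Mapping.single v 1) c :: 'v cpoly) * var v"
proof -
  have "\<alpha> - Poly_Mapping.single v 1 + Poly_Mapping.single v 1 = \<alpha>"
    using assms by (intro poly_mapping_eqI) (auto simp: lookup_add lookup_minus lookup_single when_def in_keys_iff)
  then show ?thesis by (simp add: var_def mult_single)
qed

lemma block_decomposition:
  obtains g\<^sub>i h where "g = g\<^sub>i + h" "in_block blk i g\<^sub>i" "off_block blk i h"
    "h \<in> ideal_gen {var v | v. blk v \<noteq> i}"
proof -
  define S where "S = {\<alpha>\<in>Poly_Mapping.keys g. \<forall>v\<in>Poly_Mapping.keys \<alpha>. blk v = i}"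
  define S' where "S' = Poly_Mapping.keys g - S"
  let ?part = "\<lambda>A. \<Sum>\<alpha>\<in>A. Poly_Mapping.single \<alpha> (Poly_Mapping.lookup g \<alpha>)"
  have fin: "finite S" "finite S'" unfolding S_def S'_def by auto
  have "g = ?part S + ?part S'"
    by (subst sum_monomials, subst sum.union_disjoint[symmetric])
      (use fin in \<open>auto simp: S'_def S_def intro: sum.cong\<close>)
  moreover have "in_block blk i (?part S)"
    unfolding in_block_def using keys_sum_single[of _ S] S_def by blast
  moreover have "off_block blk i (?part S')"
    unfolding off_block_def using keys_sum_single[of _ S'] S'_def S_def by blast
  moreover have "?part S' \<in> ideal_gen {var v | v. blk v \<noteq> i}"
  proof (rule sum_in_ideal_gen[OF fin(2)])
    fix \<alpha> assume "\<alpha> \<in> S'"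
    then obtain v where v: "v \<in> Poly_Mapping.keys \<alpha>" "blk v \<noteq> i"
      unfolding S'_def S_def by blast
    show "Poly_Mapping.single \<alpha> (Poly_Mapping.lookup g \<alpha>) \<in> ideal_gen {var v | v. blk v \<noteq> i}"
      by (subst single_eq_mult_var[OF v(1)]) (rule mult_in_ideal_gen, use v in blast)
  qed
  ultimately show ?thesis using that by blast
qed

lemma apolar_mult_linear_form_sum:
  assumes "i < m" "homogeneous 1 t\<^sub>i" "in_block blk i t\<^sub>i"
    and "\<forall>j<m. in_block blk j (Fs j)"
  shows "apolar (g * t\<^sub>i) (\<Sum>j<m. Fs j) = apolar (g * t\<^sub>i) (Fs i)"
proof -
  have "apolar (g * t\<^sub>i) (Fs j) = 0" if "j \<in> {..<m} - {i}" for j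
    using that assms
    by (intro apolar_off_block[of blk j] off_block_mult_right off_block_if_in_block) auto
  then show ?thesis
    using assms(1) by (simp add: sum.remove apolar_add_right apolar_sum_right)
qed

theorem mainTheorem1:
  fixes blk :: "'v::finite \<Rightarrow> nat" and m d :: nat
    and Fs :: "nat \<Rightarrow> 'v cpoly" and t :: "nat \<Rightarrow> 'v cpoly"
  assumes blk_range: "\<forall>v. blk v < m"
    and d: "d \<ge> 2"
    and Fs: "\<forall>i<m. homogeneous d (Fs i) \<and> in_block blk i (Fs i)"
    and t: "\<forall>i<m. homogeneous 1 (t i) \<and> in_block blk i (t i)"
  shows "ideal_quot (perp (\<Sum>i<m. Fs i)) (ideal_gen (t ` {..<m}))
     \<subseteq> (\<Inter>i<m. ideal_gen
            ({g. in_block blk i g \<and> t i * g \<in> perp_block blk i (Fs i)}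
             \<union> {t i} \<union> {var v | v. blk v \<noteq> i}))"
proof (intro subsetI INT_I)
  fix g i assume g: "g \<in> ideal_quot (perp (\<Sum>i<m. Fs i)) (ideal_gen (t ` {..<m}))"
    and i: "i \<in> {..<m}"
  let ?J = "{g. in_block blk i g \<and> t i * g \<in> perp_block blk i (Fs i)}
             \<union> {t i} \<union> {var v | v. blk v \<noteq> i}"
  obtain g\<^sub>i h where dec: "g = g\<^sub>i + h" "in_block blk i g\<^sub>i" "off_block blk i h"
      "h \<in> ideal_gen {var v | v. blk v \<noteq> i}"
    using block_decomposition .
  have "apolar (g * t i) (\<Sum>j<m. Fs j) = 0"
    using g i unfolding ideal_quot_def perp_def by (auto intro: gen_in_ideal_gen)
  then have "apolar (g * t i) (Fs i) = 0"
    using apolar_mult_linear_form_sum[of i m "t i" blk Fs g] i Fs t by simp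
  moreover have "apolar (h * t i) (Fs i) = 0"
    using i Fs by (intro apolar_off_block[of blk i] off_block_mult_left dec(3)) auto
  ultimately have "apolar (g\<^sub>i * t i) (Fs i) = 0"
    by (simp add: dec(1) distrib_right apolar_add_left)
  with dec(2) i t have "g\<^sub>i \<in> ideal_gen ?J"
    by (intro gen_in_ideal_gen) (simp add: perp_block_def in_block_mult mult.commute)
  moreover have "h \<in> ideal_gen ?J"
    using dec(4) ideal_gen_mono[of _ ?J] by blast
  ultimately show "g \<in> ideal_gen ?J"
    using dec(1) by (simp add: add_in_ideal_gen)
qed

end
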